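(* Let $\mathcal N$ be a network with parties $A_1,\dots,A_n$ all of whose sources are bipartite, let $p$ be the output distribution of a causally consistent model on $\mathcal N$ (finite output alphabets), and let $f_i$ be arbitrary real-valued functions of the outputs $a_i$. Then for every sign function $\epsilon$ on $\mathcal N$ and every sign matrix $\Gamma_\epsilon$ associated to $\epsilon$, the Schur product $\mathcal C(f_1,\dots,f_n)\circ\Gamma_\epsilon$ is positive semidefinite.
   Context: A network $\mathcal N$ is a bipartite graph between sources $S_\alpha$ and parties $A_i$ ($i=1,\dots,n$); $\alpha\to i$ means $S_\alpha$ is adjacent to $A_i$; no isolated vertices, and no two sources with comparable sets of adjacent parties. Here every source is adjacent to exactly two parties. Covariance matrix: $\mathcal C(f_1,\dots,f_n)_{ij}=\mathbb E[\bar f_i f_j]-\mathbb E[\bar f_i]\,\mathbb E[f_j]$. The Schur product is $(M\circ N)_{ij}=M_{ij}N_{ij}$. A sign function $\epsilon$ assigns $\epsilon(\alpha)\in\{\pm1\}$ to each source. A sign matrix $\Gamma_\epsilon=(\gamma_{ij})$ is a real symmetric $n\times n$ matrix with $\gamma_{ii}=1$ and $\gamma_{ij}=\epsilon(\alpha)$ whenever $i\neq j$ and $\alpha\to i,j$; entries $\gamma_{ij}$ for $i\ne j$ sharing no source are arbitrary. Non-fanout inflation of order $d\ge 2$: choose, for every pair $(\alpha,i)$ with $\alpha\to i$, a permutation $\pi_i^\alpha$ of $\{1,\dots,d\}$. The inflated network has parties $A_i^{(k)}$ and sources $S_\alpha^{(k)}$ ($1\le k\le d$), with $S_\alpha^{(k)}$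 adjacent to $A_i^{((\pi_i^\alpha)^{-1}(k))}$ whenever $\alpha\to i$, and no other adjacencies. Causally consistent model on $\mathcal N$: a joint distribution $p(a_1,\dots,a_n)$ of the outputs of $\mathcal N$ together with, for every non-fanout inflation of every order $d\ge2$, a joint distribution of the outputs $a_i^{(k)}$ of its parties, such that: (C0) if $A_i\neq A_j$ share no source in $\mathcal N$, then $p(a_i,a_j)=p(a_i)p(a_j)$; (C1) in every inflation, each $a_i^{(k)}$ has marginal $p(a_i)$, and if $A_i^{(k)}$ and $A_j^{(l)}$ with $i\neq j$ share a source in the inflation, then $(a_i^{(k)},a_j^{(l)})$ has joint distribution $p(a_i,a_j)$; (C2) in every inflation, if two distinct parties share no source, the joint distribution of their outputs is the product of their marginals. *)

theory Defs
  imports Complex_Main "HOL-Library.FuncSet" "HOL-Combinatorics.Permutations"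
begin

text \<open>Parties are indexed by 0..n-1; sources form a set S of some type 's;
  adj alpha i means source alpha is adjacent to party i.
  All outputs take values in a common finite type 'a (finite alphabets).\<close>

definition bipartite_network :: "nat \<Rightarrow> 's set \<Rightarrow> ('s \<Rightarrow> nat \<Rightarrow> bool) \<Rightarrow> bool" where
  "bipartite_network n S adj \<longleftrightarrow>
     finite S \<and>
     (\<forall>\<alpha>\<in>S. card {i. i < n \<and> adj \<alpha> i} = 2) \<and>
     (\<forall>i<n. \<exists>\<alpha>\<in>S. adj \<alpha> i) \<and>
     (\<forall>\<alpha>\<in>S. \<forall>\<beta>\<in>S. \<alpha> \<noteq> \<beta> \<longrightarrow>
        \<not> {i. i < n \<and> adj \<alpha> i} \<subseteq> {i. i < n \<and> adj \<beta> i})"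

definition outs :: "'i set \<Rightarrow> ('i \<Rightarrow> 'a) set" where
  "outs I = PiE I (\<lambda>_. UNIV)"

definition is_distr :: "'i set \<Rightarrow> (('i \<Rightarrow> 'a) \<Rightarrow> real) \<Rightarrow> bool" where
  "is_distr I q \<longleftrightarrow> (\<forall>x\<in>outs I. q x \<ge> 0) \<and> sum q (outs I) = 1"

definition marg1 :: "'i set \<Rightarrow> (('i \<Rightarrow> 'a) \<Rightarrow> real) \<Rightarrow> 'i \<Rightarrow> 'a \<Rightarrow> real" where
  "marg1 I q u a = sum q {x \<in> outs I. x u = a}"

definition marg2 :: "'i set \<Rightarrow> (('i \<Rightarrow> 'a) \<Rightarrow> real) \<Rightarrow> 'i \<Rightarrow> 'i \<Rightarrow> 'a \<Rightarrow> 'a \<Rightarrow> real" where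
  "marg2 I q u v a b = sum q {x \<in> outs I. x u = a \<and> x v = b}"

definition share_source :: "'s set \<Rightarrow> ('s \<Rightarrow> nat \<Rightarrow> bool) \<Rightarrow> nat \<Rightarrow> nat \<Rightarrow> bool" where
  "share_source S adj i j \<longleftrightarrow> (\<exists>\<alpha>\<in>S. adj \<alpha> i \<and> adj \<alpha> j)"

text \<open>Non-fanout inflation of order d, given by permutations pi alpha i of {0..<d}
  (for alpha adjacent to i). Party (i,k) is adjacent to source (alpha, pi alpha i k),
  i.e. source (alpha,m) is adjacent to party (i, (pi alpha i)^-1 m).\<close>
definition valid_perms :: "nat \<Rightarrow> 's set \<Rightarrow> ('s \<Rightarrow> nat \<Rightarrow> bool) \<Rightarrow> nat \<Rightarrow> ('s \<Rightarrow> nat \<Rightarrow> nat \<Rightarrow> nat) \<Rightarrow> bool" where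
  "valid_perms n S adj d \<pi> \<longleftrightarrow> (\<forall>\<alpha>\<in>S. \<forall>i<n. adj \<alpha> i \<longrightarrow> \<pi> \<alpha> i permutes {..<d})"

definition infl_share :: "'s set \<Rightarrow> ('s \<Rightarrow> nat \<Rightarrow> bool) \<Rightarrow> ('s \<Rightarrow> nat \<Rightarrow> nat \<Rightarrow> nat)
    \<Rightarrow> nat \<times> nat \<Rightarrow> nat \<times> nat \<Rightarrow> bool" where
  "infl_share S adj \<pi> u v \<longleftrightarrow>
     (\<exists>\<alpha>\<in>S. adj \<alpha> (fst u) \<and> adj \<alpha> (fst v) \<and> \<pi> \<alpha> (fst u) (snd u) = \<pi> \<alpha> (fst v) (snd v))"

definition causally_consistent ::
  "nat \<Rightarrow> 's set \<Rightarrow> ('s \<Rightarrow> nat \<Rightarrow> bool) \<Rightarrow> ((nat \<Rightarrow> 'a) \<Rightarrow> real) \<Rightarrow> bool" where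
  "causally_consistent n S adj p \<longleftrightarrow>
     is_distr {..<n} p \<and>
     \<comment> \<open>C0\<close>
     (\<forall>i<n. \<forall>j<n. i \<noteq> j \<and> \<not> share_source S adj i j \<longrightarrow>
        (\<forall>a b. marg2 {..<n} p i j a b = marg1 {..<n} p i a * marg1 {..<n} p j b)) \<and>
     (\<forall>d\<ge>2. \<forall>\<pi>. valid_perms n S adj d \<pi> \<longrightarrow>
        (\<exists>q :: (nat \<times> nat \<Rightarrow> 'a) \<Rightarrow> real.
           is_distr ({..<n} \<times> {..<d}) q \<and>
           \<comment> \<open>C1\<close>
           (\<forall>i<n. \<forall>k<d. \<forall>a. marg1 ({..<n} \<times> {..<d}) q (i,k) a = marg1 {..<n} p i a) \<and>
           (\<forall>i<n. \<forall>j<n. \<forall>k<d. \<forall>l<d. i \<noteq> j \<and> infl_share S adj \<pi> (i,k) (j,l) \<longrightarrow>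
              (\<forall>a b. marg2 ({..<n} \<times> {..<d}) q (i,k) (j,l) a b = marg2 {..<n} p i j a b)) \<and>
           \<comment> \<open>C2\<close>
           (\<forall>u\<in>{..<n} \<times> {..<d}. \<forall>v\<in>{..<n} \<times> {..<d}. u \<noteq> v \<and> \<not> infl_share S adj \<pi> u v \<longrightarrow>
              (\<forall>a b. marg2 ({..<n} \<times> {..<d}) q u v a b
                     = marg1 ({..<n} \<times> {..<d}) q u a * marg1 ({..<n} \<times> {..<d}) q v b))))"

definition expect :: "nat \<Rightarrow> ((nat \<Rightarrow> 'a) \<Rightarrow> real) \<Rightarrow> ((nat \<Rightarrow> 'a) \<Rightarrow> real) \<Rightarrow> real" where
  "expect n p g = (\<Sum>x\<in>outs {..<n}. p x * g x)"

definition covariance :: "nat \<Rightarrow> ((nat \<Rightarrow> 'a) \<Rightarrow> real) \<Rightarrow> (nat \<Rightarrow> 'a \<Rightarrow> real) \<Rightarrow> nat \<Rightarrow> nat \<Rightarrow> real" where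
  "covariance n p f i j =
     expect n p (\<lambda>x. f i (x i) * f j (x j)) - expect n p (\<lambda>x. f i (x i)) * expect n p (\<lambda>x. f j (x j))"

definition sign_function :: "'s set \<Rightarrow> ('s \<Rightarrow> real) \<Rightarrow> bool" where
  "sign_function S \<epsilon> \<longleftrightarrow> (\<forall>\<alpha>\<in>S. \<epsilon> \<alpha> = 1 \<or> \<epsilon> \<alpha> = -1)"

definition sign_matrix :: "nat \<Rightarrow> 's set \<Rightarrow> ('s \<Rightarrow> nat \<Rightarrow> bool) \<Rightarrow> ('s \<Rightarrow> real) \<Rightarrow> (nat \<Rightarrow> nat \<Rightarrow> real) \<Rightarrow> bool" where
  "sign_matrix n S adj \<epsilon> \<Gamma> \<longleftrightarrow>
     (\<forall>i<n. \<forall>j<n. \<Gamma> i j = \<Gamma> j i) \<and>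
     (\<forall>i<n. \<Gamma> i i = 1) \<and>
     (\<forall>\<alpha>\<in>S. \<forall>i<n. \<forall>j<n. i \<noteq> j \<and> adj \<alpha> i \<and> adj \<alpha> j \<longrightarrow> \<Gamma> i j = \<epsilon> \<alpha>)"

definition schur :: "(nat \<Rightarrow> nat \<Rightarrow> real) \<Rightarrow> (nat \<Rightarrow> nat \<Rightarrow> real) \<Rightarrow> nat \<Rightarrow> nat \<Rightarrow> real" where
  "schur M N i j = M i j * N i j"

definition psd :: "nat \<Rightarrow> (nat \<Rightarrow> nat \<Rightarrow> real) \<Rightarrow> bool" where
  "psd n M \<longleftrightarrow> (\<forall>i<n. \<forall>j<n. M i j = M j i) \<and>
     (\<forall>v :: nat \<Rightarrow> real. (\<Sum>i<n. \<Sum>j<n. v i * M i j * v j) \<ge> 0)"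

end

theory Submission imports Defs begin

text \<open>Take the inflation of order 2 in which the two copies of each source \<alpha> with
  \<epsilon> \<alpha> = -1 are crossed, and let D i be the difference of f i evaluated at the two
  copies of party i. Every second moment of the inflation is a moment of p: it is
  E[f i f j] when the two copies share a source and E[f i] E[f j] otherwise. Expanding,
  E[D i D j] is twice the covariance of f i and f j, times \<epsilon> \<alpha> when i and j share
  the source \<alpha>. So the Schur product is half a Gram matrix, hence positive semidefinite.\<close>

lemma finite_outs: "finite I \<Longrightarrow> finite (outs I :: ('i \<Rightarrow> 'a::finite) set)"
  by (simp add: outs_def finite_PiE)

lemma sum_outs_marg1:
  fixes q :: "('i \<Rightarrow> 'a::finite) \<Rightarrow> real"
  assumes "finite I"
  shows "(\<Sum>x\<in>outs I. q x * g (x u)) = (\<Sum>a\<in>UNIV. g a * marg1 I q u a)"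
proof -
  have fin: "finite (outs I :: ('i \<Rightarrow> 'a) set)"
    using finite_outs[OF assms] .
  have "(\<Sum>a\<in>UNIV. g a * marg1 I q u a)
      = (\<Sum>a\<in>UNIV. \<Sum>x\<in>outs I. if x u = a then q x * g (x u) else 0)"
    unfolding marg1_def using fin
    by (auto simp add: sum_distrib_left sum.inter_filter intro!: sum.cong)
  also have "\<dots> = (\<Sum>x\<in>outs I. \<Sum>a\<in>UNIV. if x u = a then q x * g (x u) else 0)"
    by (rule sum.swap)
  also have "\<dots> = (\<Sum>x\<in>outs I. q x * g (x u))"
    by simp
  finally show ?thesis by simp
qed

lemma sum_outs_marg2:
  fixes q :: "('i \<Rightarrow> 'a::finite) \<Rightarrow> real"
  assumes "finite I"
  shows "(\<Sum>x\<in>outs I. q x * (g (x u) * h (x v)))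
       = (\<Sum>a\<in>UNIV. \<Sum>b\<in>UNIV. g a * h b * marg2 I q u v a b)"
proof -
  have fin: "finite (outs I :: ('i \<Rightarrow> 'a) set)"
    using finite_outs[OF assms] .
  have "(\<Sum>a\<in>UNIV. \<Sum>b\<in>UNIV. g a * h b * marg2 I q u v a b)
      = (\<Sum>a\<in>UNIV. \<Sum>b\<in>UNIV. \<Sum>x\<in>outs I.
           if x u = a \<and> x v = b then q x * (g (x u) * h (x v)) else 0)"
    unfolding marg2_def using fin
    by (auto simp add: sum_distrib_left sum.inter_filter intro!: sum.cong)
  also have "\<dots> = (\<Sum>x\<in>outs I. \<Sum>a\<in>UNIV. \<Sum>b\<in>UNIV.
           if x u = a \<and> x v = b then q x * (g (x u) * h (x v)) else 0)"
    by (simp add: sum.swap[of _ UNIV "outs I"])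
  also have "\<dots> = (\<Sum>x\<in>outs I. q x * (g (x u) * h (x v)))"
  proof (rule sum.cong[OF refl])
    fix x :: "'i \<Rightarrow> 'a"
    have "(\<Sum>a\<in>UNIV. \<Sum>b\<in>UNIV. if x u = a \<and> x v = b then q x * (g (x u) * h (x v)) else 0)
       = (\<Sum>a\<in>UNIV. if x u = a then \<Sum>b\<in>UNIV. if x v = b then q x * (g (x u) * h (x v)) else 0 else 0)"
      by (rule sum.cong) auto
    then show "(\<Sum>a\<in>UNIV. \<Sum>b\<in>UNIV. if x u = a \<and> x v = b then q x * (g (x u) * h (x v)) else 0)
       = q x * (g (x u) * h (x v))"
      by simp
  qed
  finally show ?thesis by simp
qed

lemma sum_outs_indep:
  fixes q :: "('i \<Rightarrow> 'a::finite) \<Rightarrow> real"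
  assumes "finite I" and "\<And>a b. marg2 I q u v a b = marg1 I q u a * marg1 I q v b"
  shows "(\<Sum>x\<in>outs I. q x * (g (x u) * h (x v)))
       = (\<Sum>x\<in>outs I. q x * g (x u)) * (\<Sum>x\<in>outs I. q x * h (x v))"
  unfolding sum_outs_marg2[OF assms(1)] sum_outs_marg1[OF assms(1)] assms(2) sum_product
  by (simp add: mult_ac)

lemma covariance_sym: "covariance n p f i j = covariance n p f j i"
  unfolding covariance_def expect_def by (simp add: mult_ac)

lemma covariance_eq_0_if_indep:
  fixes p :: "(nat \<Rightarrow> 'a::finite) \<Rightarrow> real"
  assumes "\<And>a b. marg2 {..<n} p i j a b = marg1 {..<n} p i a * marg1 {..<n} p j b"
  shows "covariance n p f i j = 0"
  unfolding covariance_def expect_def using sum_outs_indep[of "{..<n}" p i j, OF _ assms] by simp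

lemma quadratic_form_weighted_gram_nonneg:
  fixes q :: "'x \<Rightarrow> real"
  assumes "finite X" and "\<And>x. x \<in> X \<Longrightarrow> 0 \<le> q x"
  shows "0 \<le> (\<Sum>i\<in>A. \<Sum>j\<in>A. v i * (\<Sum>x\<in>X. q x * (D i x * D j x)) * v j)"
proof -
  have "0 \<le> (\<Sum>x\<in>X. q x * (\<Sum>i\<in>A. v i * D i x)\<^sup>2)"
    by (rule sum_nonneg) (simp add: assms(2))
  also have "\<dots> = (\<Sum>x\<in>X. \<Sum>i\<in>A. \<Sum>j\<in>A. v i * (q x * (D i x * D j x)) * v j)"
    by (simp add: power2_eq_square sum_product sum_distrib_left mult_ac)
  also have "\<dots> = (\<Sum>i\<in>A. \<Sum>j\<in>A. v i * (\<Sum>x\<in>X. q x * (D i x * D j x)) * v j)"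
    by (simp add: sum.swap[of _ X] sum_distrib_left sum_distrib_right)
  finally show ?thesis .
qed

subsection \<open>Bipartite networks\<close>

lemma bipartite_network_adjacent_parties:
  assumes "bipartite_network n S adj" "\<alpha> \<in> S" "i < n" "j < n" "i \<noteq> j" "adj \<alpha> i" "adj \<alpha> j"
  shows "{k. k < n \<and> adj \<alpha> k} = {i, j}"
proof -
  have "card {k. k < n \<and> adj \<alpha> k} = 2"
    using assms unfolding bipartite_network_def by blast
  moreover have "{i, j} \<subseteq> {k. k < n \<and> adj \<alpha> k}" "card {i, j} = 2"
    using assms by auto
  ultimately show ?thesis
    using card_subset_eq[of "{k. k < n \<and> adj \<alpha> k}" "{i, j}"] by simp
qed

lemma bipartite_network_source_unique:
  assumes bn: "bipartite_network n S adj" and "\<alpha> \<in> S" "\<beta> \<in> S" "i < n" "j < n" "i \<noteq> j"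
    and "adj \<alpha> i" "adj \<alpha> j" "adj \<beta> i" "adj \<beta> j"
  shows "\<alpha> = \<beta>"
proof (rule ccontr)
  assume "\<alpha> \<noteq> \<beta>"
  moreover have "{k. k < n \<and> adj \<alpha> k} = {k. k < n \<and> adj \<beta> k}"
    using bipartite_network_adjacent_parties[OF bn] assms by simp
  ultimately show False
    using bn assms(2,3) unfolding bipartite_network_def by blast
qed

lemma infl_share_imp_share_source:
  "infl_share S adj \<pi> (i, k) (j, l) \<Longrightarrow> share_source S adj i j"
  unfolding infl_share_def share_source_def by auto

lemma infl_share_copies:
  assumes "valid_perms n S adj d \<pi>" "i < n" "k \<noteq> l"
  shows "\<not> infl_share S adj \<pi> (i, k) (i, l)"
proof
  assume "infl_share S adj \<pi> (i, k) (i, l)"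
  then obtain \<alpha> where "\<alpha> \<in> S" "adj \<alpha> i" "\<pi> \<alpha> i k = \<pi> \<alpha> i l"
    unfolding infl_share_def by auto
  moreover from this assms have "\<pi> \<alpha> i permutes {..<d}"
    unfolding valid_perms_def by blast
  ultimately show False
    using assms(3) permutes_inj injD by metis
qed

lemma infl_share_iff_source:
  assumes "bipartite_network n S adj" "\<alpha> \<in> S" "i < n" "j < n" "i \<noteq> j" "adj \<alpha> i" "adj \<alpha> j"
  shows "infl_share S adj \<pi> (i, k) (j, l) \<longleftrightarrow> \<pi> \<alpha> i k = \<pi> \<alpha> j l"
proof
  assume "infl_share S adj \<pi> (i, k) (j, l)"
  then obtain \<beta> where "\<beta> \<in> S" "adj \<beta> i" "adj \<beta> j" "\<pi> \<beta> i k = \<pi> \<beta> j l"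
    unfolding infl_share_def by auto
  moreover from this have "\<beta> = \<alpha>"
    using bipartite_network_source_unique[OF assms(1)] assms by blast
  ultimately show "\<pi> \<alpha> i k = \<pi> \<alpha> j l" by simp
qed (use assms in \<open>auto simp: infl_share_def\<close>)

subsection \<open>Moments of an inflation\<close>

definition inflation_model ::
  "nat \<Rightarrow> 's set \<Rightarrow> ('s \<Rightarrow> nat \<Rightarrow> bool) \<Rightarrow> ((nat \<Rightarrow> 'a) \<Rightarrow> real) \<Rightarrow> nat
    \<Rightarrow> ('s \<Rightarrow> nat \<Rightarrow> nat \<Rightarrow> nat) \<Rightarrow> ((nat \<times> nat \<Rightarrow> 'a) \<Rightarrow> real) \<Rightarrow> bool" where
  "inflation_model n S adj p d \<pi> q \<longleftrightarrow>
     is_distr ({..<n} \<times> {..<d}) q \<and>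
     (\<forall>i<n. \<forall>k<d. \<forall>a. marg1 ({..<n} \<times> {..<d}) q (i,k) a = marg1 {..<n} p i a) \<and>
     (\<forall>i<n. \<forall>j<n. \<forall>k<d. \<forall>l<d. i \<noteq> j \<and> infl_share S adj \<pi> (i,k) (j,l) \<longrightarrow>
        (\<forall>a b. marg2 ({..<n} \<times> {..<d}) q (i,k) (j,l) a b = marg2 {..<n} p i j a b)) \<and>
     (\<forall>u\<in>{..<n} \<times> {..<d}. \<forall>v\<in>{..<n} \<times> {..<d}. u \<noteq> v \<and> \<not> infl_share S adj \<pi> u v \<longrightarrow>
        (\<forall>a b. marg2 ({..<n} \<times> {..<d}) q u v a b
               = marg1 ({..<n} \<times> {..<d}) q u a * marg1 ({..<n} \<times> {..<d}) q v b))"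

lemma causally_consistent_inflation_model:
  fixes p :: "(nat \<Rightarrow> 'a) \<Rightarrow> real"
  assumes "causally_consistent n S adj p" "2 \<le> d" "valid_perms n S adj d \<pi>"
  obtains q where "inflation_model n S adj p d \<pi> q"
proof -
  have "\<forall>d\<ge>2. \<forall>\<pi>. valid_perms n S adj d \<pi> \<longrightarrow> (\<exists>q. inflation_model n S adj p d \<pi> q)"
    using assms(1) unfolding causally_consistent_def inflation_model_def by (elim conjE)
  then show ?thesis
    using assms(2,3) that by blast
qed

lemma causally_consistent_indep:
  assumes "causally_consistent n S adj p" "i < n" "j < n" "i \<noteq> j" "\<not> share_source S adj i j"
  shows "marg2 {..<n} p i j a b = marg1 {..<n} p i a * marg1 {..<n} p j b"
proof -
  have "\<forall>i<n. \<forall>j<n. i \<noteq> j \<and> \<not> share_source S adj i j \<longrightarrow>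
      (\<forall>a b. marg2 {..<n} p i j a b = marg1 {..<n} p i a * marg1 {..<n} p j b)"
    using assms(1) unfolding causally_consistent_def by (elim conjE)
  then show ?thesis
    using assms(2-5) by blast
qed

context
  fixes n :: nat and S :: "'s set" and adj and d \<pi>
    and q :: "(nat \<times> nat \<Rightarrow> 'a::finite) \<Rightarrow> real" and p :: "(nat \<Rightarrow> 'a) \<Rightarrow> real"
  assumes infl: "inflation_model n S adj p d \<pi> q"
begin

lemma inflation_nonneg: "x \<in> outs ({..<n} \<times> {..<d}) \<Longrightarrow> 0 \<le> q x"
  using infl unfolding inflation_model_def is_distr_def by (elim conjE) blast

lemma inflation_marg1:
  assumes "i < n" "k < d"
  shows "marg1 ({..<n} \<times> {..<d}) q (i, k) a = marg1 {..<n} p i a"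
proof -
  have "\<forall>i<n. \<forall>k<d. \<forall>a. marg1 ({..<n} \<times> {..<d}) q (i,k) a = marg1 {..<n} p i a"
    using infl unfolding inflation_model_def by (elim conjE)
  then show ?thesis
    using assms by blast
qed

lemma inflation_marg2_shared:
  assumes "i < n" "j < n" "k < d" "l < d" "i \<noteq> j" "infl_share S adj \<pi> (i, k) (j, l)"
  shows "marg2 ({..<n} \<times> {..<d}) q (i, k) (j, l) a b = marg2 {..<n} p i j a b"
proof -
  have "\<forall>i<n. \<forall>j<n. \<forall>k<d. \<forall>l<d. i \<noteq> j \<and> infl_share S adj \<pi> (i,k) (j,l) \<longrightarrow>
      (\<forall>a b. marg2 ({..<n} \<times> {..<d}) q (i,k) (j,l) a b = marg2 {..<n} p i j a b)"
    using infl unfolding inflation_model_def by (elim conjE)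
  then show ?thesis
    using assms by blast
qed

lemma inflation_marg2_unshared:
  assumes "i < n" "j < n" "k < d" "l < d" "(i, k) \<noteq> (j, l)" "\<not> infl_share S adj \<pi> (i, k) (j, l)"
  shows "marg2 ({..<n} \<times> {..<d}) q (i, k) (j, l) a b
       = marg1 ({..<n} \<times> {..<d}) q (i, k) a * marg1 ({..<n} \<times> {..<d}) q (j, l) b"
proof -
  have "\<forall>u\<in>{..<n} \<times> {..<d}. \<forall>v\<in>{..<n} \<times> {..<d}. u \<noteq> v \<and> \<not> infl_share S adj \<pi> u v \<longrightarrow>
      (\<forall>a b. marg2 ({..<n} \<times> {..<d}) q u v a b
             = marg1 ({..<n} \<times> {..<d}) q u a * marg1 ({..<n} \<times> {..<d}) q v b)"
    using infl unfolding inflation_model_def by (elim conjE)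
  moreover have "(i, k) \<in> {..<n} \<times> {..<d}" "(j, l) \<in> {..<n} \<times> {..<d}"
    using assms by auto
  ultimately show ?thesis
    using assms(5,6) by (simp del: prod.inject)
qed

lemma inflation_moment1:
  assumes "i < n" "k < d"
  shows "(\<Sum>x\<in>outs ({..<n} \<times> {..<d}). q x * g (x (i, k))) = expect n p (\<lambda>x. g (x i))"
proof -
  have "(\<Sum>x\<in>outs ({..<n} \<times> {..<d}). q x * g (x (i, k)))
      = (\<Sum>a\<in>UNIV. g a * marg1 ({..<n} \<times> {..<d}) q (i, k) a)"
    by (rule sum_outs_marg1) simp
  also have "\<dots> = (\<Sum>a\<in>UNIV. g a * marg1 {..<n} p i a)"
    using inflation_marg1[OF assms] by simp
  also have "\<dots> = expect n p (\<lambda>x. g (x i))"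
    unfolding expect_def by (rule sum_outs_marg1[symmetric]) simp
  finally show ?thesis .
qed

lemma inflation_moment_same_copy:
  assumes "i < n" "k < d"
  shows "(\<Sum>x\<in>outs ({..<n} \<times> {..<d}). q x * (g (x (i, k)) * h (x (i, k))))
       = expect n p (\<lambda>x. g (x i) * h (x i))"
  using inflation_moment1[OF assms, of "\<lambda>c. g c * h c"] by simp

lemma inflation_moment_shared:
  assumes "i < n" "j < n" "k < d" "l < d" "i \<noteq> j" "infl_share S adj \<pi> (i, k) (j, l)"
  shows "(\<Sum>x\<in>outs ({..<n} \<times> {..<d}). q x * (g (x (i, k)) * h (x (j, l))))
       = expect n p (\<lambda>x. g (x i) * h (x j))"
proof -
  have "(\<Sum>x\<in>outs ({..<n} \<times> {..<d}). q x * (g (x (i, k)) * h (x (j, l))))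
      = (\<Sum>a\<in>UNIV. \<Sum>b\<in>UNIV. g a * h b * marg2 ({..<n} \<times> {..<d}) q (i, k) (j, l) a b)"
    by (rule sum_outs_marg2) simp
  also have "\<dots> = (\<Sum>a\<in>UNIV. \<Sum>b\<in>UNIV. g a * h b * marg2 {..<n} p i j a b)"
    using inflation_marg2_shared[OF assms] by simp
  also have "\<dots> = expect n p (\<lambda>x. g (x i) * h (x j))"
    unfolding expect_def by (rule sum_outs_marg2[symmetric]) simp
  finally show ?thesis .
qed

lemma inflation_moment_unshared:
  assumes "i < n" "j < n" "k < d" "l < d" "(i, k) \<noteq> (j, l)" "\<not> infl_share S adj \<pi> (i, k) (j, l)"
  shows "(\<Sum>x\<in>outs ({..<n} \<times> {..<d}). q x * (g (x (i, k)) * h (x (j, l))))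
       = expect n p (\<lambda>x. g (x i)) * expect n p (\<lambda>x. h (x j))"
proof -
  have "(\<Sum>x\<in>outs ({..<n} \<times> {..<d}). q x * (g (x (i, k)) * h (x (j, l))))
      = (\<Sum>x\<in>outs ({..<n} \<times> {..<d}). q x * g (x (i, k)))
        * (\<Sum>x\<in>outs ({..<n} \<times> {..<d}). q x * h (x (j, l)))"
    by (rule sum_outs_indep) (simp_all add: inflation_marg2_unshared[OF assms])
  then show ?thesis
    using assms by (simp add: inflation_moment1)
qed

end

definition copy_difference :: "(nat \<Rightarrow> 'a \<Rightarrow> real) \<Rightarrow> nat \<Rightarrow> (nat \<times> nat \<Rightarrow> 'a) \<Rightarrow> real" where
  "copy_difference f i x = f i (x (i, 0)) - f i (x (i, 1))"

lemma sum_copy_difference_mult: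
  fixes q :: "(nat \<times> nat \<Rightarrow> 'a) \<Rightarrow> real" and X f i j
  defines "M k l \<equiv> \<Sum>x\<in>X. q x * (f i (x (i, k)) * f j (x (j, l)))"
  shows "(\<Sum>x\<in>X. q x * (copy_difference f i x * copy_difference f j x))
       = M 0 0 - M 0 1 - M 1 0 + M 1 1"
  unfolding M_def copy_difference_def
  by (simp add: sum.distrib[symmetric] sum_subtractf[symmetric] algebra_simps)

context
  fixes n :: nat and S :: "'s set" and adj \<pi>
    and q :: "(nat \<times> nat \<Rightarrow> 'a::finite) \<Rightarrow> real" and p :: "(nat \<Rightarrow> 'a) \<Rightarrow> real"
  assumes infl: "inflation_model n S adj p 2 \<pi> q"
begin

lemma copy_difference_moment_same:
  assumes "valid_perms n S adj 2 \<pi>" "i < n"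
  shows "(\<Sum>x\<in>outs ({..<n} \<times> {..<2}). q x * (copy_difference f i x * copy_difference f i x))
       = 2 * covariance n p f i i"
proof -
  have "\<not> infl_share S adj \<pi> (i, k) (i, l)" if "k \<noteq> l" for k l
    using infl_share_copies[OF assms that] .
  then show ?thesis
    using assms(2)
    by (simp add: sum_copy_difference_mult covariance_def
        inflation_moment_same_copy[OF infl] inflation_moment_unshared[OF infl])
qed

lemma copy_difference_moment_shared:
  assumes "i < n" "j < n" "i \<noteq> j" "e = 1 \<or> e = -1"
    and share: "\<And>k l. k < 2 \<Longrightarrow> l < 2 \<Longrightarrow> infl_share S adj \<pi> (i, k) (j, l) \<longleftrightarrow> (k = l \<longleftrightarrow> e = 1)"
  shows "(\<Sum>x\<in>outs ({..<n} \<times> {..<2}). q x * (copy_difference f i x * copy_difference f j x))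
       = 2 * (covariance n p f i j * e)"
  using assms(4)
  by (elim disjE)
    (use assms(1-3) share in \<open>simp_all add: sum_copy_difference_mult covariance_def
        inflation_moment_shared[OF infl] inflation_moment_unshared[OF infl]\<close>)

lemma copy_difference_moment_unshared:
  assumes "i < n" "j < n" "i \<noteq> j" "\<And>k l. \<not> infl_share S adj \<pi> (i, k) (j, l)"
  shows "(\<Sum>x\<in>outs ({..<n} \<times> {..<2}). q x * (copy_difference f i x * copy_difference f j x)) = 0"
  using assms by (simp add: sum_copy_difference_mult inflation_moment_unshared[OF infl])

end

subsection \<open>The crossed inflation of order 2\<close>

text \<open>Of the two parties adjacent to a source \<alpha> with \<epsilon> \<alpha> = -1, the one with the
  smaller index attaches its copy k to the copy 1 - k of \<alpha>.\<close>

definition crossed_perms :: "nat \<Rightarrow> ('s \<Rightarrow> nat \<Rightarrow> bool) \<Rightarrow> ('s \<Rightarrow> real) \<Rightarrow> 's \<Rightarrow> nat \<Rightarrow> nat \<Rightarrow> nat" where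
  "crossed_perms n adj \<epsilon> \<alpha> i =
     (if \<epsilon> \<alpha> = -1 \<and> (\<exists>j<n. adj \<alpha> j \<and> i < j) then transpose 0 1 else id)"

lemma valid_perms_crossed_perms: "valid_perms n S adj 2 (crossed_perms n adj \<epsilon>)"
  unfolding valid_perms_def crossed_perms_def by (auto intro: permutes_swap_id)

lemma crossed_perms_adjacent:
  assumes "bipartite_network n S adj" "\<alpha> \<in> S" "i < j" "j < n" "adj \<alpha> i" "adj \<alpha> j"
  shows "crossed_perms n adj \<epsilon> \<alpha> i = (if \<epsilon> \<alpha> = -1 then transpose 0 1 else id)"
    and "crossed_perms n adj \<epsilon> \<alpha> j = id"
proof -
  have "{m. m < n \<and> adj \<alpha> m} = {i, j}"
    using bipartite_network_adjacent_parties[OF assms(1,2)] assms(3-6) by simp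
  then have "m = i \<or> m = j" if "m < n" "adj \<alpha> m" for m
    using that by blast
  then have "\<not> (\<exists>m<n. adj \<alpha> m \<and> j < m)"
    using assms(3) by fastforce
  then show "crossed_perms n adj \<epsilon> \<alpha> j = id"
    unfolding crossed_perms_def by (intro if_not_P) blast
  have "\<exists>m<n. adj \<alpha> m \<and> i < m"
    using assms(3-6) by blast
  then show "crossed_perms n adj \<epsilon> \<alpha> i = (if \<epsilon> \<alpha> = -1 then transpose 0 1 else id)"
    unfolding crossed_perms_def by simp
qed

lemma transpose_01_eq_iff: "k < 2 \<Longrightarrow> l < 2 \<Longrightarrow> transpose 0 1 k = l \<longleftrightarrow> k \<noteq> (l::nat)"
  by (cases "k = 0"; cases "l = 0") (auto simp: transpose_def)

lemma infl_share_crossed_perms_iff: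
  assumes bn: "bipartite_network n S adj" and "sign_function S \<epsilon>"
    and "\<alpha> \<in> S" "i < n" "j < n" "i \<noteq> j" "adj \<alpha> i" "adj \<alpha> j" "k < 2" "l < 2"
  shows "infl_share S adj (crossed_perms n adj \<epsilon>) (i, k) (j, l) \<longleftrightarrow> (k = l \<longleftrightarrow> \<epsilon> \<alpha> = 1)"
proof -
  have \<epsilon>: "\<epsilon> \<alpha> = 1 \<or> \<epsilon> \<alpha> = -1"
    using assms(2,3) unfolding sign_function_def by blast
  have "crossed_perms n adj \<epsilon> \<alpha> i k = crossed_perms n adj \<epsilon> \<alpha> j l \<longleftrightarrow> (k = l \<longleftrightarrow> \<epsilon> \<alpha> = 1)"
  proof (cases "i < j")
    case True
    then show ?thesis
      using crossed_perms_adjacent[OF bn assms(3) True assms(5,7,8)] \<epsilon> transpose_01_eq_iff assms(9,10)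
      by auto
  next
    case False
    then have "j < i" using assms(6) by simp
    then show ?thesis
      using crossed_perms_adjacent[OF bn assms(3) _ assms(4,8,7)] \<epsilon> transpose_01_eq_iff assms(9,10)
      by auto
  qed
  then show ?thesis
    using infl_share_iff_source[OF bn assms(3-8)] by simp
qed

lemma crossed_copy_difference_moment:
  fixes q :: "(nat \<times> nat \<Rightarrow> 'a::finite) \<Rightarrow> real"
  assumes bn: "bipartite_network n S adj" and cc: "causally_consistent n S adj p"
    and "sign_function S \<epsilon>" and \<Gamma>: "sign_matrix n S adj \<epsilon> \<Gamma>"
    and infl: "inflation_model n S adj p 2 (crossed_perms n adj \<epsilon>) q"
    and ij: "i < n" "j < n"
  shows "(\<Sum>x\<in>outs ({..<n} \<times> {..<2}). q x * (copy_difference f i x * copy_difference f j x))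
       = 2 * schur (covariance n p f) \<Gamma> i j"
proof -
  consider "i = j" | "i \<noteq> j" "share_source S adj i j" | "i \<noteq> j" "\<not> share_source S adj i j"
    by blast
  then show ?thesis
  proof cases
    case 1
    then show ?thesis
      using \<Gamma> ij copy_difference_moment_same[OF infl valid_perms_crossed_perms]
      by (simp add: schur_def sign_matrix_def)
  next
    case 2
    then obtain \<alpha> where \<alpha>: "\<alpha> \<in> S" "adj \<alpha> i" "adj \<alpha> j"
      unfolding share_source_def by blast
    then have "\<Gamma> i j = \<epsilon> \<alpha>" "\<epsilon> \<alpha> = 1 \<or> \<epsilon> \<alpha> = -1"
      using \<Gamma> \<open>sign_function S \<epsilon>\<close> ij 2 unfolding sign_matrix_def sign_function_def by blast+
    then show ?thesis
      using copy_difference_moment_shared[OF infl ij 2(1)]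
        infl_share_crossed_perms_iff[OF bn \<open>sign_function S \<epsilon>\<close> \<alpha>(1) ij 2(1) \<alpha>(2,3)]
      by (simp add: schur_def)
  next
    case 3
    then have "\<not> infl_share S adj (crossed_perms n adj \<epsilon>) (i, k) (j, l)" for k l
      using infl_share_imp_share_source by blast
    then show ?thesis
      using copy_difference_moment_unshared[OF infl ij 3(1)]
        covariance_eq_0_if_indep[OF causally_consistent_indep[OF cc ij 3]]
      by (simp add: schur_def)
  qed
qed

theorem lemma4:
  fixes n :: nat and S :: "'s set" and adj :: "'s \<Rightarrow> nat \<Rightarrow> bool"
    and p :: "(nat \<Rightarrow> 'a::finite) \<Rightarrow> real" and f :: "nat \<Rightarrow> 'a \<Rightarrow> real"
    and \<epsilon> :: "'s \<Rightarrow> real" and \<Gamma> :: "nat \<Rightarrow> nat \<Rightarrow> real"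
  assumes "bipartite_network n S adj"
    and "causally_consistent n S adj p"
    and "sign_function S \<epsilon>"
    and "sign_matrix n S adj \<epsilon> \<Gamma>"
  shows "psd n (schur (covariance n p f) \<Gamma>)"
proof -
  obtain q where infl: "inflation_model n S adj p 2 (crossed_perms n adj \<epsilon>) q"
    using causally_consistent_inflation_model[OF assms(2) _ valid_perms_crossed_perms] by blast
  have "0 \<le> (\<Sum>i<n. \<Sum>j<n. v i * schur (covariance n p f) \<Gamma> i j * v j)" for v
  proof -
    have "0 \<le> (\<Sum>i<n. \<Sum>j<n. v i * (\<Sum>x\<in>outs ({..<n} \<times> {..<2}).
           q x * (copy_difference f i x * copy_difference f j x)) * v j)"
      by (rule quadratic_form_weighted_gram_nonneg) (simp_all add: finite_outs inflation_nonneg[OF infl])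
    also have "\<dots> = 2 * (\<Sum>i<n. \<Sum>j<n. v i * schur (covariance n p f) \<Gamma> i j * v j)"
      by (simp add: crossed_copy_difference_moment[OF assms infl] sum_distrib_left mult_ac)
    finally show ?thesis by simp
  qed
  moreover have "schur (covariance n p f) \<Gamma> i j = schur (covariance n p f) \<Gamma> j i" if "i < n" "j < n" for i j
    using assms(4) that covariance_sym unfolding schur_def sign_matrix_def by metis
  ultimately show ?thesis
    unfolding psd_def by simp
qed

end
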